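(* Fix $x$ and integers $K\ge 0$, $L\ge 1$. Let $p(x\mid z)$ be a likelihood, $p(z,\zeta)$ a joint density with $p(z)=\int p(z,\zeta)\,d\zeta$, $p(x,z)=p(x\mid z)p(z)$ and $p(x)=\int p(x,z)\,dz$. Let $q(z,\psi\mid x)=q(\psi\mid x)\,q(z\mid\psi,x)$ be a joint density with marginal $q(z\mid x)=\int q(z,\psi\mid x)\,d\psi$. Let $\tau(\psi\mid z,x)$ be a conditional density in $\psi$ such that $\tau(\psi\mid z,x)=0$ implies $q(z,\psi\mid x)=0$, and $\rho(\zeta\mid z)$ a conditional density in $\zeta$. Then $$\log p(x)\ge\mathbb{E}_{q(z\mid x)}\log\frac{p(x,z)}{q(z\mid x)}\ge\mathbb{E}_{q(z,\psi_0\mid x)}\,\mathbb{E}_{\tau(\psi_{1:K}\mid z,x)}\,\mathbb{E}_{\rho(\zeta_{1:L}\mid z)}\log\frac{p(x\mid z)\,\frac{1}{L}\sum_{l=1}^L\frac{p(z,\zeta_l)}{\rho(\zeta_l\mid z)}}{\frac{1}{K+1}\sum_{k=0}^K\frac{q(z,\psi_k\mid x)}{\tau(\psi_k\mid z,x)}},$$ where $(z,\psi_0)\sim q(z,\psi\mid x)$, and given $z$, $\psi_1,\dots,\psi_K$ are i.i.d. from $\tau(\cdot\mid z,x)$ and $\zeta_1,\dots,\zeta_L$ are i.i.d. from $\rho(\cdot\mid z)$.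
   Context: All densities are with respect to fixed base measures; $\log$ is the natural logarithm. *)

theory Defs
  imports "HOL-Probability.Probability"
begin

text \<open>The observation x is fixed throughout, so it is suppressed from all densities.
  Base measures: Mz for z, Mpsi for psi, Mzeta for zeta.
  lik z = p(x|z); pj z zeta = p(z,zeta); q z psi = q(z,psi|x);
  tau z psi = tau(psi|z,x); rho z zeta = rho(zeta|z).\<close>

definition marg :: "'a measure \<Rightarrow> ('z \<Rightarrow> 'a \<Rightarrow> real) \<Rightarrow> 'z \<Rightarrow> real" where
  "marg M f z = enn2real (\<integral>\<^sup>+ a. ennreal (f z a) \<partial>M)"

definition evidence :: "'z measure \<Rightarrow> 'c measure \<Rightarrow> ('z \<Rightarrow> real) \<Rightarrow> ('z \<Rightarrow> 'c \<Rightarrow> real) \<Rightarrow> ennreal" where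
  "evidence Mz Mzeta lik pj = (\<integral>\<^sup>+ z. ennreal (lik z * marg Mzeta pj z) \<partial>Mz)"

definition qz_measure :: "'z measure \<Rightarrow> 'b measure \<Rightarrow> ('z \<Rightarrow> 'b \<Rightarrow> real) \<Rightarrow> 'z measure" where
  "qz_measure Mz Mpsi q = density Mz (\<lambda>z. ennreal (marg Mpsi q z))"

definition elbo_integrand :: "'b measure \<Rightarrow> 'c measure \<Rightarrow> ('z \<Rightarrow> real) \<Rightarrow> ('z \<Rightarrow> 'c \<Rightarrow> real)
     \<Rightarrow> ('z \<Rightarrow> 'b \<Rightarrow> real) \<Rightarrow> 'z \<Rightarrow> real" where
  "elbo_integrand Mpsi Mzeta lik pj q z = ln (lik z * marg Mzeta pj z / marg Mpsi q z)"

definition joint_measure :: "'z measure \<Rightarrow> 'b measure \<Rightarrow> 'c measure \<Rightarrow> nat \<Rightarrow> nat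
     \<Rightarrow> ('z \<Rightarrow> 'b \<Rightarrow> real) \<Rightarrow> ('z \<Rightarrow> 'b \<Rightarrow> real) \<Rightarrow> ('z \<Rightarrow> 'c \<Rightarrow> real)
     \<Rightarrow> (('z \<times> 'b) \<times> ((nat \<Rightarrow> 'b) \<times> (nat \<Rightarrow> 'c))) measure" where
  "joint_measure Mz Mpsi Mzeta K L q tau rho =
     density ((Mz \<Otimes>\<^sub>M Mpsi) \<Otimes>\<^sub>M (PiM {1..K} (\<lambda>_. Mpsi) \<Otimes>\<^sub>M PiM {1..L} (\<lambda>_. Mzeta)))
       (\<lambda>((z, psi0), (psis, zetas)).
          ennreal (q z psi0 * (\<Prod>k\<in>{1..K}. tau z (psis k)) * (\<Prod>l\<in>{1..L}. rho z (zetas l))))"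

definition diw_ratio :: "nat \<Rightarrow> nat \<Rightarrow> ('z \<Rightarrow> real) \<Rightarrow> ('z \<Rightarrow> 'c \<Rightarrow> real)
     \<Rightarrow> ('z \<Rightarrow> 'b \<Rightarrow> real) \<Rightarrow> ('z \<Rightarrow> 'b \<Rightarrow> real) \<Rightarrow> ('z \<Rightarrow> 'c \<Rightarrow> real)
     \<Rightarrow> ('z \<times> 'b) \<times> ((nat \<Rightarrow> 'b) \<times> (nat \<Rightarrow> 'c)) \<Rightarrow> real" where
  "diw_ratio K L lik pj q tau rho w =
     (case w of ((z, psi0), (psis, zetas)) \<Rightarrow>
       (lik z * ((1 / real L) * (\<Sum>l\<in>{1..L}. pj z (zetas l) / rho z (zetas l))))
       / ((1 / real (K + 1)) * (q z psi0 / tau z psi0 + (\<Sum>k\<in>{1..K}. q z (psis k) / tau z (psis k)))))"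

definition diw_integrand where
  "diw_integrand K L lik pj q tau rho w = ln (diw_ratio K L lik pj q tau rho w)"

end

(*
  Both inequalities follow from one Gibbs-type bound: on a probability space, if f, g > 0 a.e.
  and E[g / f] <= 1, then E[ln g] <= E[ln f], since ln (g / f) <= g / f - 1.

  For the first inequality take f = p(x) and g = p(x,z) / q(z|x), whose q-expectation is at
  most p(x).  For the second take f = p(x,z) / q(z|x) at the sampled z and g the doubly
  importance-weighted ratio.  Their quotient factors as
    (pz_estimate / p(z)) * (q(z|x) / qz_estimate).
  Given z, the first factor has expectation at most 1 because the average over zeta_1..zeta_L
  is an importance-sampling estimate of p(z).  For the second, the support condition on tau
  turns (z, psi_0) ~ q into psi_0 ~ tau reweighted by w(psi_0), w = q(z, .) / tau(. | z), so its
  expectation is q(z|x) times E[w(psi_0) / mean_k w(psi_k)] for an i.i.d. tau-sample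
  psi_0..psi_K; by exchangeability the K+1 normalised weights have equal expectations and sum
  to at most K+1.
*)

theory Submission
  imports Defs "HOL-Combinatorics.Transposition"
begin

lemma distr_PiM_reindex_bij_betw:
  assumes N: "sigma_finite_measure N" and I: "finite I" and \<pi>: "bij_betw \<pi> I I"
  shows "distr (PiM I (\<lambda>_. N)) (PiM I (\<lambda>_. N)) (\<lambda>x. \<lambda>i\<in>I. x (\<pi> i)) = PiM I (\<lambda>_. N)"
proof -
  interpret product_sigma_finite "\<lambda>_. N" using N by (simp add: product_sigma_finite_def)
  have \<pi>_in: "\<pi> i \<in> I" if "i \<in> I" for i using bij_betw_apply[OF \<pi> that] .
  have inv_bij: "bij_betw (inv_into I \<pi>) I I" using \<pi> by (rule bij_betw_inv_into)
  have inv_in: "inv_into I \<pi> j \<in> I" if "j \<in> I" for j using bij_betw_apply[OF inv_bij that] .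
  have \<pi>_inv: "\<pi> (inv_into I \<pi> j) = j" if "j \<in> I" for j using bij_betw_inv_into_right[OF \<pi> that] .
  have inv_\<pi>: "inv_into I \<pi> (\<pi> i) = i" if "i \<in> I" for i using bij_betw_inv_into_left[OF \<pi> that] .
  have meas: "(\<lambda>x. \<lambda>i\<in>I. x (\<pi> i)) \<in> PiM I (\<lambda>_. N) \<rightarrow>\<^sub>M PiM I (\<lambda>_. N)"
    by (intro measurable_restrict measurable_component_singleton \<pi>_in)
  show ?thesis
  proof (rule PiM_eqI[OF I])
    fix A assume A: "\<And>i. i \<in> I \<Longrightarrow> A i \<in> sets N"
    have "(\<lambda>x. \<lambda>i\<in>I. x (\<pi> i)) -` PiE I A \<inter> space (PiM I (\<lambda>_. N)) = PiE I (\<lambda>j. A (inv_into I \<pi> j))"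
      using A[THEN sets.sets_into_space] \<pi>_in
      by (auto simp: space_PiM PiE_def Pi_def extensional_def)
        (metis inv_in \<pi>_inv, metis inv_\<pi>, metis inv_in subsetD)
    then have "emeasure (distr (PiM I (\<lambda>_. N)) (PiM I (\<lambda>_. N)) (\<lambda>x. \<lambda>i\<in>I. x (\<pi> i))) (PiE I A)
        = emeasure (PiM I (\<lambda>_. N)) (PiE I (\<lambda>j. A (inv_into I \<pi> j)))"
      using A I by (subst emeasure_distr[OF meas]) (auto intro: sets_PiM_I_finite)
    also have "\<dots> = (\<Prod>j\<in>I. emeasure N (A (inv_into I \<pi> j)))"
      using A inv_in I by (intro emeasure_PiM) auto
    also have "\<dots> = (\<Prod>i\<in>I. emeasure N (A i))"
      by (rule prod.reindex_bij_betw[OF inv_bij])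
    finally show "emeasure (distr (PiM I (\<lambda>_. N)) (PiM I (\<lambda>_. N)) (\<lambda>x. \<lambda>i\<in>I. x (\<pi> i))) (PiE I A)
        = (\<Prod>i\<in>I. emeasure N (A i))" .
  qed simp
qed

lemma nn_integral_PiM_reindex_bij_betw:
  assumes N: "sigma_finite_measure N" and I: "finite I" and \<pi>: "bij_betw \<pi> I I"
    and f: "f \<in> borel_measurable (PiM I (\<lambda>_. N))"
  shows "(\<integral>\<^sup>+ x. f (\<lambda>i\<in>I. x (\<pi> i)) \<partial>PiM I (\<lambda>_. N)) = integral\<^sup>N (PiM I (\<lambda>_. N)) f"
proof -
  have meas: "(\<lambda>x. \<lambda>i\<in>I. x (\<pi> i)) \<in> PiM I (\<lambda>_. N) \<rightarrow>\<^sub>M PiM I (\<lambda>_. N)"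
    using bij_betw_apply[OF \<pi>] by (intro measurable_restrict measurable_component_singleton)
  have "integral\<^sup>N (PiM I (\<lambda>_. N)) f = integral\<^sup>N (distr (PiM I (\<lambda>_. N)) (PiM I (\<lambda>_. N)) (\<lambda>x. \<lambda>i\<in>I. x (\<pi> i))) f"
    by (simp add: distr_PiM_reindex_bij_betw[OF N I \<pi>])
  also have "\<dots> = (\<integral>\<^sup>+ x. f (\<lambda>i\<in>I. x (\<pi> i)) \<partial>PiM I (\<lambda>_. N))"
    using f by (intro nn_integral_distr[OF meas]) simp
  finally show ?thesis ..
qed

lemma nn_integral_PiM_prod_density:
  fixes r :: "'a \<Rightarrow> real"
  assumes N: "sigma_finite_measure N" and I: "finite I"
    and [measurable]: "r \<in> borel_measurable N"
    and r_nn: "\<And>a. a \<in> space N \<Longrightarrow> 0 \<le> r a" and r_prob: "(\<integral>\<^sup>+ a. ennreal (r a) \<partial>N) = 1"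
  shows "(\<integral>\<^sup>+ x. ennreal (\<Prod>k\<in>I. r (x k)) \<partial>PiM I (\<lambda>_. N)) = 1"
proof -
  interpret product_sigma_finite "\<lambda>_. N" using N by (simp add: product_sigma_finite_def)
  have "(\<integral>\<^sup>+ x. ennreal (\<Prod>k\<in>I. r (x k)) \<partial>PiM I (\<lambda>_. N)) = (\<integral>\<^sup>+ x. (\<Prod>k\<in>I. ennreal (r (x k))) \<partial>PiM I (\<lambda>_. N))"
    using r_nn by (intro nn_integral_cong) (simp add: prod_ennreal space_PiM PiE_iff)
  also have "\<dots> = (\<Prod>k\<in>I. \<integral>\<^sup>+ a. ennreal (r a) \<partial>N)"
    by (rule product_nn_integral_prod[OF I]) simp
  finally show ?thesis
    by (simp add: r_prob)
qed

lemma nn_integral_PiM_prod_density_component: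
  fixes r :: "'a \<Rightarrow> real" and h :: "'a \<Rightarrow> ennreal"
  assumes N: "sigma_finite_measure N" and I: "finite I" "l \<in> I"
    and [measurable]: "r \<in> borel_measurable N" "h \<in> borel_measurable N"
    and r_prob: "(\<integral>\<^sup>+ a. ennreal (r a) \<partial>N) = 1"
  shows "(\<integral>\<^sup>+ x. (\<Prod>k\<in>I. ennreal (r (x k))) * h (x l) \<partial>PiM I (\<lambda>_. N)) = (\<integral>\<^sup>+ a. ennreal (r a) * h a \<partial>N)"
proof -
  interpret product_sigma_finite "\<lambda>_. N" using N by (simp add: product_sigma_finite_def)
  define g where "g k a = (if k = l then ennreal (r a) * h a else ennreal (r a))" for k a
  have "(\<Prod>k\<in>I. ennreal (r (x k))) * h (x l) = (\<Prod>k\<in>I. g k (x k))" for x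
  proof -
    have "(\<Prod>k\<in>I-{l}. g k (x k)) = (\<Prod>k\<in>I-{l}. ennreal (r (x k)))"
      by (intro prod.cong) (auto simp: g_def)
    then show ?thesis by (simp add: prod.remove[OF I] g_def mult_ac)
  qed
  then have "(\<integral>\<^sup>+ x. (\<Prod>k\<in>I. ennreal (r (x k))) * h (x l) \<partial>PiM I (\<lambda>_. N))
      = (\<integral>\<^sup>+ x. (\<Prod>k\<in>I. g k (x k)) \<partial>PiM I (\<lambda>_. N))"
    by simp
  also have "\<dots> = (\<Prod>k\<in>I. integral\<^sup>N N (g k))"
    by (rule product_nn_integral_prod[OF I(1)]) (simp add: g_def)
  also have "\<dots> = (\<integral>\<^sup>+ a. ennreal (r a) * h a \<partial>N)"
  proof -
    have "(\<Prod>k\<in>I-{l}. integral\<^sup>N N (g k)) = 1"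
      by (intro prod.neutral) (simp add: g_def[abs_def] r_prob)
    then show ?thesis by (simp add: prod.remove[OF I] g_def[abs_def])
  qed
  finally show ?thesis .
qed

lemma sum_self_normalized_weights_le:
  fixes v :: "'i \<Rightarrow> real"
  assumes "0 \<le> P" "0 < n"
  shows "(\<Sum>j\<in>I. P * (v j / ((1 / n) * (\<Sum>k\<in>I. v k)))) \<le> n * P"
proof -
  have "(\<Sum>j\<in>I. P * (v j / ((1 / n) * (\<Sum>k\<in>I. v k)))) = P / ((1 / n) * (\<Sum>k\<in>I. v k)) * (\<Sum>k\<in>I. v k)"
    by (simp add: sum_distrib_left)
  also have "\<dots> \<le> n * P"
    using assms by (cases "(\<Sum>k\<in>I. v k) = 0") auto
  finally show ?thesis .
qed

lemma nn_integral_PiM_self_normalized_weight_le_1: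
  fixes t v :: "'a \<Rightarrow> real"
  assumes N: "sigma_finite_measure N" and I: "finite I" "i \<in> I"
    and [measurable]: "t \<in> borel_measurable N" "v \<in> borel_measurable N"
    and t_nn: "\<And>a. a \<in> space N \<Longrightarrow> 0 \<le> t a" and v_nn: "\<And>a. a \<in> space N \<Longrightarrow> 0 \<le> v a"
    and t_prob: "(\<integral>\<^sup>+ a. ennreal (t a) \<partial>N) = 1"
  shows "(\<integral>\<^sup>+ x. ennreal ((\<Prod>k\<in>I. t (x k)) * (v (x i) / ((1 / real (card I)) * (\<Sum>k\<in>I. v (x k)))))
           \<partial>PiM I (\<lambda>_. N)) \<le> 1"
proof -
  interpret product_sigma_finite "\<lambda>_. N" using N by (simp add: product_sigma_finite_def)
  define n where "n = real (card I)"
  have n_pos: "0 < n" using I by (auto simp: n_def card_gt_0_iff)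
  define W where "W j x = ennreal ((\<Prod>k\<in>I. t (x k)) * (v (x j) / ((1 / n) * (\<Sum>k\<in>I. v (x k)))))" for j x
  have W_meas[measurable]: "W j \<in> borel_measurable (PiM I (\<lambda>_. N))" if "j \<in> I" for j
    unfolding W_def using I that by measurable
  have exchangeable: "integral\<^sup>N (PiM I (\<lambda>_. N)) (W j) = integral\<^sup>N (PiM I (\<lambda>_. N)) (W i)" if j: "j \<in> I" for j
  proof -
    have \<tau>: "bij_betw (Transposition.transpose i j) I I" using I j by simp
    have "W i (\<lambda>k\<in>I. x (Transposition.transpose i j k)) = W j x" for x
      using I j by (simp add: W_def prod.reindex_bij_betw[OF \<tau>, of "\<lambda>k. t (x k)"]
          sum.reindex_bij_betw[OF \<tau>, of "\<lambda>k. v (x k)"] cong: prod.cong sum.cong)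
    then show ?thesis
      using nn_integral_PiM_reindex_bij_betw[OF N I(1) \<tau> W_meas[OF I(2)]] by simp
  qed
  have sum_W: "(\<Sum>j\<in>I. W j x) \<le> ennreal n * ennreal (\<Prod>k\<in>I. t (x k))"
    if x: "x \<in> space (PiM I (\<lambda>_. N))" for x
  proof -
    define P where "P = (\<Prod>k\<in>I. t (x k))"
    have x_in: "k \<in> I \<Longrightarrow> x k \<in> space N" for k using x by (auto simp: space_PiM)
    have P_nn: "0 \<le> P" unfolding P_def using x_in t_nn by (auto intro: prod_nonneg)
    have S_nn: "0 \<le> (\<Sum>k\<in>I. v (x k))" using x_in v_nn by (auto intro: sum_nonneg)
    have "(\<Sum>j\<in>I. W j x) = ennreal (\<Sum>j\<in>I. P * (v (x j) / ((1 / n) * (\<Sum>k\<in>I. v (x k)))))"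
      unfolding W_def P_def[symmetric] using P_nn S_nn n_pos x_in v_nn
      by (intro sum_ennreal) (auto intro!: divide_nonneg_nonneg mult_nonneg_nonneg)
    also have "\<dots> \<le> ennreal (n * P)"
      by (intro ennreal_leI sum_self_normalized_weights_le P_nn n_pos)
    finally have "(\<Sum>j\<in>I. W j x) \<le> ennreal (n * P)" .
    then show ?thesis
      using P_nn n_pos by (simp add: ennreal_mult P_def)
  qed
  have "ennreal n * integral\<^sup>N (PiM I (\<lambda>_. N)) (W i) = (\<Sum>j\<in>I. integral\<^sup>N (PiM I (\<lambda>_. N)) (W j))"
    by (simp add: exchangeable n_def ennreal_of_nat_eq_real_of_nat)
  also have "\<dots> = (\<integral>\<^sup>+ x. (\<Sum>j\<in>I. W j x) \<partial>PiM I (\<lambda>_. N))"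
    by (rule nn_integral_sum[symmetric]) simp
  also have "\<dots> \<le> (\<integral>\<^sup>+ x. ennreal n * ennreal (\<Prod>k\<in>I. t (x k)) \<partial>PiM I (\<lambda>_. N))"
    by (intro nn_integral_mono sum_W)
  also have "\<dots> = ennreal n * 1"
    using nn_integral_PiM_prod_density[OF N I(1) _ t_nn t_prob] by (simp add: nn_integral_cmult)
  finally have "integral\<^sup>N (PiM I (\<lambda>_. N)) (W i) \<le> 1"
    using n_pos by (subst (asm) ennreal_mult_le_mult_iff) auto
  then show ?thesis
    by (simp add: W_def[abs_def] n_def)
qed

lemma nn_integral_PiM_importance_average_le:
  fixes r p :: "'a \<Rightarrow> real"
  assumes N: "sigma_finite_measure N" and I: "finite I" "I \<noteq> {}"
    and [measurable]: "r \<in> borel_measurable N" "p \<in> borel_measurable N"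
    and r_nn: "\<And>a. a \<in> space N \<Longrightarrow> 0 \<le> r a" and p_nn: "\<And>a. a \<in> space N \<Longrightarrow> 0 \<le> p a"
    and r_prob: "(\<integral>\<^sup>+ a. ennreal (r a) \<partial>N) = 1"
  shows "(\<integral>\<^sup>+ x. ennreal ((\<Prod>k\<in>I. r (x k)) * ((1 / real (card I)) * (\<Sum>l\<in>I. p (x l) / r (x l))))
           \<partial>PiM I (\<lambda>_. N)) \<le> (\<integral>\<^sup>+ a. ennreal (p a) \<partial>N)"
proof -
  define c where "c = real (card I)"
  have c_pos: "0 < c" using I by (simp add: c_def card_gt_0_iff)
  have integrand: "ennreal ((\<Prod>k\<in>I. r (x k)) * ((1 / c) * (\<Sum>l\<in>I. p (x l) / r (x l))))
      = (\<Sum>l\<in>I. ennreal (1 / c) * ((\<Prod>k\<in>I. ennreal (r (x k))) * ennreal (p (x l) / r (x l))))"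
    if "x \<in> space (PiM I (\<lambda>_. N))" for x
  proof -
    have x_in: "k \<in> I \<Longrightarrow> x k \<in> space N" for k using that by (auto simp: space_PiM)
    have P_nn: "0 \<le> (\<Prod>k\<in>I. r (x k))" using x_in r_nn by (auto intro: prod_nonneg)
    have ratio_nn: "0 \<le> p (x l) / r (x l)" if "l \<in> I" for l
      using x_in[OF that] r_nn p_nn by simp
    have "(\<Sum>l\<in>I. ennreal (1 / c) * ((\<Prod>k\<in>I. ennreal (r (x k))) * ennreal (p (x l) / r (x l))))
        = (\<Sum>l\<in>I. ennreal ((1 / c) * ((\<Prod>k\<in>I. r (x k)) * (p (x l) / r (x l)))))"
    proof (intro sum.cong refl)
      fix l assume "l \<in> I"
      have "(\<Prod>k\<in>I. ennreal (r (x k))) = ennreal (\<Prod>k\<in>I. r (x k))"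
        using x_in r_nn by (intro prod_ennreal) simp
      then show "ennreal (1 / c) * ((\<Prod>k\<in>I. ennreal (r (x k))) * ennreal (p (x l) / r (x l)))
          = ennreal ((1 / c) * ((\<Prod>k\<in>I. r (x k)) * (p (x l) / r (x l))))"
        using P_nn divide_nonneg_pos[OF zero_le_one c_pos]
        by (simp only: ennreal_mult')
    qed
    also have "\<dots> = ennreal (\<Sum>l\<in>I. (1 / c) * ((\<Prod>k\<in>I. r (x k)) * (p (x l) / r (x l))))"
      using P_nn c_pos ratio_nn by (intro sum_ennreal mult_nonneg_nonneg) simp_all
    also have "(\<Sum>l\<in>I. (1 / c) * ((\<Prod>k\<in>I. r (x k)) * (p (x l) / r (x l))))
        = (\<Prod>k\<in>I. r (x k)) * ((1 / c) * (\<Sum>l\<in>I. p (x l) / r (x l)))"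
      by (simp add: sum_distrib_left mult_ac)
    finally show ?thesis ..
  qed
  have "(\<integral>\<^sup>+ x. ennreal ((\<Prod>k\<in>I. r (x k)) * ((1 / c) * (\<Sum>l\<in>I. p (x l) / r (x l)))) \<partial>PiM I (\<lambda>_. N))
      = (\<Sum>l\<in>I. ennreal (1 / c) *
           (\<integral>\<^sup>+ x. (\<Prod>k\<in>I. ennreal (r (x k))) * ennreal (p (x l) / r (x l)) \<partial>PiM I (\<lambda>_. N)))"
    using I by (simp only: nn_integral_cong[OF integrand]) (subst nn_integral_sum, auto intro!: sum.cong nn_integral_cmult)
  also have "\<dots> = (\<Sum>l\<in>I. ennreal (1 / c) * (\<integral>\<^sup>+ a. ennreal (r a) * ennreal (p a / r a) \<partial>N))"
    by (intro sum.cong refl arg_cong2[where f = "(*)"] nn_integral_PiM_prod_density_component[OF N I(1)])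
      (simp_all add: r_prob)
  also have "\<dots> \<le> (\<Sum>l\<in>I. ennreal (1 / c) * (\<integral>\<^sup>+ a. ennreal (p a) \<partial>N))"
  proof (intro sum_mono mult_left_mono nn_integral_mono)
    fix a assume a: "a \<in> space N"
    have "r a * (p a / r a) \<le> p a"
      using r_nn[OF a] p_nn[OF a] by (cases "r a = 0") auto
    then show "ennreal (r a) * ennreal (p a / r a) \<le> ennreal (p a)"
      using r_nn[OF a] by (simp only: ennreal_mult'[symmetric] ennreal_leI)
  qed simp
  also have "\<dots> = ennreal c * (ennreal (1 / c) * (\<integral>\<^sup>+ a. ennreal (p a) \<partial>N))"
    by (simp add: c_def ennreal_of_nat_eq_real_of_nat)
  also have "\<dots> = (\<integral>\<^sup>+ a. ennreal (p a) \<partial>N)"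
    using c_pos by (simp add: mult.assoc[symmetric] ennreal_mult'[symmetric])
  finally show ?thesis
    by (simp add: c_def)
qed

lemma (in prob_space) integral_ln_le_of_nn_integral_ratio_le_1:
  fixes f g :: "'a \<Rightarrow> real"
  assumes f_pos: "AE x in M. 0 < f x" and g_pos: "AE x in M. 0 < g x"
    and f_int: "integrable M (\<lambda>x. ln (f x))" and g_int: "integrable M (\<lambda>x. ln (g x))"
    and ratio: "(\<integral>\<^sup>+ x. ennreal (g x / f x) \<partial>M) \<le> 1"
  shows "(\<integral> x. ln (g x) \<partial>M) \<le> (\<integral> x. ln (f x) \<partial>M)"
proof -
  have "(\<integral>\<^sup>+ x. ennreal (ln (g x) - ln (f x) + 1) \<partial>M) \<le> (\<integral>\<^sup>+ x. ennreal (g x / f x) \<partial>M)"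
    using f_pos g_pos
  proof (intro nn_integral_mono_AE, eventually_elim)
    case (elim x)
    then have "ln (g x) - ln (f x) = ln (g x / f x)" by (simp add: ln_div)
    also have "\<dots> \<le> g x / f x - 1" using elim by (intro ln_le_minus_one) simp
    finally show ?case by (intro ennreal_leI) simp
  qed
  then have "(\<integral> x. ln (g x) - ln (f x) + 1 \<partial>M) \<le> 1"
    using ratio by (intro integral_real_bounded) auto
  moreover have "(\<integral> x. ln (g x) - ln (f x) + 1 \<partial>M) = (\<integral> x. ln (g x) \<partial>M) - (\<integral> x. ln (f x) \<partial>M) + 1"
    using f_int g_int by (simp add: prob_space)
  ultimately show ?thesis by simp
qed

lemma borel_measurable_marg:
  assumes "sigma_finite_measure N" and [measurable]: "(\<lambda>(z, a). f z a) \<in> borel_measurable (M \<Otimes>\<^sub>M N)"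
  shows "marg N f \<in> borel_measurable M"
  unfolding marg_def
  by (intro borel_measurable_enn2real sigma_finite_measure.borel_measurable_nn_integral[OF assms(1)]) simp

locale latent_variable_model =
  fixes Mz :: "'z measure" and Mpsi :: "'b measure" and Mzeta :: "'c measure"
    and lik :: "'z \<Rightarrow> real" and pj :: "'z \<Rightarrow> 'c \<Rightarrow> real" and q :: "'z \<Rightarrow> 'b \<Rightarrow> real"
  assumes sigma_finite_Mpsi: "sigma_finite_measure Mpsi"
    and sigma_finite_Mzeta: "sigma_finite_measure Mzeta"
    and lik_meas[measurable]: "lik \<in> borel_measurable Mz"
    and lik_nn: "\<And>z. z \<in> space Mz \<Longrightarrow> 0 \<le> lik z"
    and pj_meas: "(\<lambda>(z, zeta). pj z zeta) \<in> borel_measurable (Mz \<Otimes>\<^sub>M Mzeta)"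
    and pj_nn: "\<And>z zeta. z \<in> space Mz \<Longrightarrow> zeta \<in> space Mzeta \<Longrightarrow> 0 \<le> pj z zeta"
    and q_meas: "(\<lambda>(z, psi). q z psi) \<in> borel_measurable (Mz \<Otimes>\<^sub>M Mpsi)"
    and q_nn: "\<And>z psi. z \<in> space Mz \<Longrightarrow> psi \<in> space Mpsi \<Longrightarrow> 0 \<le> q z psi"
    and q_prob: "(\<integral>\<^sup>+ w. ennreal (case w of (z, psi) \<Rightarrow> q z psi) \<partial>(Mz \<Otimes>\<^sub>M Mpsi)) = 1"
begin

sublocale Psi: sigma_finite_measure Mpsi by (rule sigma_finite_Mpsi)

lemma measurable_q[measurable (raw)]:
  "f \<in> N \<rightarrow>\<^sub>M Mz \<Longrightarrow> g \<in> N \<rightarrow>\<^sub>M Mpsi \<Longrightarrow> (\<lambda>x. q (f x) (g x)) \<in> borel_measurable N"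
  using measurable_compose[OF measurable_Pair q_meas] by simp

lemma measurable_pj[measurable (raw)]:
  "f \<in> N \<rightarrow>\<^sub>M Mz \<Longrightarrow> g \<in> N \<rightarrow>\<^sub>M Mzeta \<Longrightarrow> (\<lambda>x. pj (f x) (g x)) \<in> borel_measurable N"
  using measurable_compose[OF measurable_Pair pj_meas] by simp

abbreviation "qz \<equiv> marg Mpsi q"
abbreviation "pz \<equiv> marg Mzeta pj"
abbreviation "Qz \<equiv> qz_measure Mz Mpsi q"

definition elbo_ratio :: "'z \<Rightarrow> real" where
  "elbo_ratio z = lik z * pz z / qz z"

lemma elbo_integrand_eq: "elbo_integrand Mpsi Mzeta lik pj q = (\<lambda>z. ln (elbo_ratio z))"
  by (simp add: fun_eq_iff elbo_integrand_def elbo_ratio_def)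

lemma measurable_qz[measurable]: "qz \<in> borel_measurable Mz"
  using sigma_finite_Mpsi q_meas by (rule borel_measurable_marg)

lemma measurable_pz[measurable]: "pz \<in> borel_measurable Mz"
  using sigma_finite_Mzeta pj_meas by (rule borel_measurable_marg)

lemma measurable_elbo_ratio[measurable]: "elbo_ratio \<in> borel_measurable Mz"
  unfolding elbo_ratio_def by measurable

lemma nn_integral_q_total: "(\<integral>\<^sup>+ z. \<integral>\<^sup>+ a. ennreal (q z a) \<partial>Mpsi \<partial>Mz) = 1"
  using sigma_finite_measure.nn_integral_fst[OF sigma_finite_Mpsi, of "\<lambda>(z, a). ennreal (q z a)" Mz] q_prob
  by (simp add: case_prod_beta')

lemma AE_ennreal_qz: "AE z in Mz. ennreal (qz z) = (\<integral>\<^sup>+ a. ennreal (q z a) \<partial>Mpsi)"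
proof -
  have "AE z in Mz. (\<integral>\<^sup>+ a. ennreal (q z a) \<partial>Mpsi) \<noteq> \<infinity>"
    by (rule nn_integral_PInf_AE) (simp_all add: nn_integral_q_total)
  then show ?thesis
    by eventually_elim (simp add: marg_def less_top)
qed

lemma nn_integral_qz: "(\<integral>\<^sup>+ z. ennreal (qz z) \<partial>Mz) = 1"
  using nn_integral_cong_AE[OF AE_ennreal_qz] nn_integral_q_total by simp

lemma prob_space_Qz: "prob_space Qz"
  by (rule prob_spaceI)
    (simp add: qz_measure_def emeasure_density nn_integral_qz cong: nn_integral_cong)

lemma nn_integral_elbo_ratio_le_evidence: "(\<integral>\<^sup>+ z. ennreal (elbo_ratio z) \<partial>Qz) \<le> evidence Mz Mzeta lik pj"
proof -
  have "(\<integral>\<^sup>+ z. ennreal (elbo_ratio z) \<partial>Qz) = (\<integral>\<^sup>+ z. ennreal (qz z) * ennreal (elbo_ratio z) \<partial>Mz)"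
    unfolding qz_measure_def by (rule nn_integral_density) auto
  also have "\<dots> \<le> (\<integral>\<^sup>+ z. ennreal (lik z * pz z) \<partial>Mz)"
  proof (rule nn_integral_mono)
    fix z assume z: "z \<in> space Mz"
    have "qz z * elbo_ratio z \<le> lik z * pz z"
      using lik_nn[OF z] by (cases "qz z = 0") (auto simp: elbo_ratio_def marg_def)
    then show "ennreal (qz z) * ennreal (elbo_ratio z) \<le> ennreal (lik z * pz z)"
      by (simp add: ennreal_mult'[symmetric] ennreal_leI marg_def)
  qed
  finally show ?thesis
    by (simp add: evidence_def)
qed

theorem elbo_le_ln_evidence:
  assumes evidence_finite: "evidence Mz Mzeta lik pj < \<infinity>"
    and elbo_ratio_pos: "AE z in Qz. 0 < elbo_ratio z"
    and elbo_integrable: "integrable Qz (\<lambda>z. ln (elbo_ratio z))"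
  shows "(\<integral> z. ln (elbo_ratio z) \<partial>Qz) \<le> ln (enn2real (evidence Mz Mzeta lik pj))"
proof -
  interpret Q: prob_space Qz by (rule prob_space_Qz)
  define P where "P = enn2real (evidence Mz Mzeta lik pj)"
  have evidence_eq: "evidence Mz Mzeta lik pj = ennreal P"
    using evidence_finite by (simp add: P_def less_top)
  have "0 < (\<integral>\<^sup>+ z. ennreal (elbo_ratio z) \<partial>Qz)"
  proof (rule ccontr)
    assume "\<not> ?thesis"
    then have "(\<integral>\<^sup>+ z. ennreal (elbo_ratio z) \<partial>Qz) = 0"
      by simp
    then have "AE z in Qz. ennreal (elbo_ratio z) = 0"
      by (subst (asm) nn_integral_0_iff_AE) (auto simp: qz_measure_def)
    with elbo_ratio_pos have "AE z in Qz. False"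
      by eventually_elim simp
    then show False by simp
  qed
  then have P_pos: "0 < P"
    using nn_integral_elbo_ratio_le_evidence
    by (metis evidence_eq order.strict_trans2 ennreal_less_zero_iff)
  have "(\<integral>\<^sup>+ z. ennreal (elbo_ratio z / P) \<partial>Qz) = (\<integral>\<^sup>+ z. ennreal (elbo_ratio z) * ennreal (1 / P) \<partial>Qz)"
    using P_pos by (intro nn_integral_cong) (simp add: ennreal_mult'' divide_inverse)
  also have "\<dots> = (\<integral>\<^sup>+ z. ennreal (elbo_ratio z) \<partial>Qz) * ennreal (1 / P)"
    by (rule nn_integral_multc) (simp add: qz_measure_def)
  also have "\<dots> \<le> ennreal P * ennreal (1 / P)"
    using nn_integral_elbo_ratio_le_evidence by (intro mult_right_mono) (simp_all add: evidence_eq)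
  also have "\<dots> = 1"
    using P_pos by (simp flip: ennreal_mult')
  finally have "(\<integral> z. ln (elbo_ratio z) \<partial>Qz) \<le> (\<integral> z. ln P \<partial>Qz)"
    using P_pos elbo_ratio_pos elbo_integrable
    by (intro Q.integral_ln_le_of_nn_integral_ratio_le_1) simp_all
  then show ?thesis
    by (simp add: P_def Q.prob_space)
qed

end

locale diw_model = latent_variable_model Mz Mpsi Mzeta lik pj q
  for Mz :: "'z measure" and Mpsi :: "'b measure" and Mzeta :: "'c measure"
    and lik :: "'z \<Rightarrow> real" and pj :: "'z \<Rightarrow> 'c \<Rightarrow> real" and q :: "'z \<Rightarrow> 'b \<Rightarrow> real" +
  fixes K L :: nat and tau :: "'z \<Rightarrow> 'b \<Rightarrow> real" and rho :: "'z \<Rightarrow> 'c \<Rightarrow> real"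
  assumes L_pos: "1 \<le> L"
    and tau_meas: "(\<lambda>(z, psi). tau z psi) \<in> borel_measurable (Mz \<Otimes>\<^sub>M Mpsi)"
    and tau_nn: "\<And>z psi. z \<in> space Mz \<Longrightarrow> psi \<in> space Mpsi \<Longrightarrow> 0 \<le> tau z psi"
    and tau_prob: "\<And>z. z \<in> space Mz \<Longrightarrow> (\<integral>\<^sup>+ psi. ennreal (tau z psi) \<partial>Mpsi) = 1"
    and tau_supp: "\<And>z psi. z \<in> space Mz \<Longrightarrow> psi \<in> space Mpsi \<Longrightarrow> tau z psi = 0 \<Longrightarrow> q z psi = 0"
    and rho_meas: "(\<lambda>(z, zeta). rho z zeta) \<in> borel_measurable (Mz \<Otimes>\<^sub>M Mzeta)"
    and rho_nn: "\<And>z zeta. z \<in> space Mz \<Longrightarrow> zeta \<in> space Mzeta \<Longrightarrow> 0 \<le> rho z zeta"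
    and rho_prob: "\<And>z. z \<in> space Mz \<Longrightarrow> (\<integral>\<^sup>+ zeta. ennreal (rho z zeta) \<partial>Mzeta) = 1"
begin

lemma measurable_tau[measurable (raw)]:
  "f \<in> N \<rightarrow>\<^sub>M Mz \<Longrightarrow> g \<in> N \<rightarrow>\<^sub>M Mpsi \<Longrightarrow> (\<lambda>x. tau (f x) (g x)) \<in> borel_measurable N"
  using measurable_compose[OF measurable_Pair tau_meas] by simp

lemma measurable_rho[measurable (raw)]:
  "f \<in> N \<rightarrow>\<^sub>M Mz \<Longrightarrow> g \<in> N \<rightarrow>\<^sub>M Mzeta \<Longrightarrow> (\<lambda>x. rho (f x) (g x)) \<in> borel_measurable N"
  using measurable_compose[OF measurable_Pair rho_meas] by simp

abbreviation "PsiK \<equiv> PiM {1..K} (\<lambda>_. Mpsi)"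
abbreviation "ZetaL \<equiv> PiM {1..L} (\<lambda>_. Mzeta)"
abbreviation "Jw \<equiv> joint_measure Mz Mpsi Mzeta K L q tau rho"

sublocale PsiK: sigma_finite_measure PsiK
  using sigma_finite_Mpsi by (intro product_sigma_finite.sigma_finite) (simp_all add: product_sigma_finite_def)

sublocale ZetaL: sigma_finite_measure ZetaL
  using sigma_finite_Mzeta by (intro product_sigma_finite.sigma_finite) (simp_all add: product_sigma_finite_def)

sublocale PsiZeta: sigma_finite_measure "PsiK \<Otimes>\<^sub>M ZetaL"
  by (rule sigma_finite_pair_measure) unfold_locales

definition joint_density :: "('z \<times> 'b) \<times> (nat \<Rightarrow> 'b) \<times> (nat \<Rightarrow> 'c) \<Rightarrow> ennreal" where
  "joint_density = (\<lambda>((z, a), (ps, zs)).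
     ennreal (q z a * (\<Prod>k\<in>{1..K}. tau z (ps k)) * (\<Prod>l\<in>{1..L}. rho z (zs l))))"

lemma measurable_joint_density[measurable]:
  "joint_density \<in> borel_measurable ((Mz \<Otimes>\<^sub>M Mpsi) \<Otimes>\<^sub>M (PsiK \<Otimes>\<^sub>M ZetaL))"
  unfolding joint_density_def split_beta' by measurable

lemma joint_measure_eq_density: "Jw = density ((Mz \<Otimes>\<^sub>M Mpsi) \<Otimes>\<^sub>M (PsiK \<Otimes>\<^sub>M ZetaL)) joint_density"
  unfolding joint_measure_def joint_density_def ..

lemma nn_integral_joint_density_section:
  assumes z: "z \<in> space Mz" and a: "a \<in> space Mpsi"
    and [measurable]: "G \<in> borel_measurable ((Mz \<Otimes>\<^sub>M Mpsi) \<Otimes>\<^sub>M (PsiK \<Otimes>\<^sub>M ZetaL))"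
  shows "(\<integral>\<^sup>+ y. joint_density ((z, a), y) * G ((z, a), y) \<partial>(PsiK \<Otimes>\<^sub>M ZetaL)) =
    ennreal (q z a) * (\<integral>\<^sup>+ ps. ennreal (\<Prod>k\<in>{1..K}. tau z (ps k)) *
      (\<integral>\<^sup>+ zs. ennreal (\<Prod>l\<in>{1..L}. rho z (zs l)) * G ((z, a), (ps, zs)) \<partial>ZetaL) \<partial>PsiK)"
proof -
  let ?I = "\<lambda>ps. \<integral>\<^sup>+ zs. ennreal (\<Prod>l\<in>{1..L}. rho z (zs l)) * G ((z, a), (ps, zs)) \<partial>ZetaL"
  have "(\<integral>\<^sup>+ y. joint_density ((z, a), y) * G ((z, a), y) \<partial>(PsiK \<Otimes>\<^sub>M ZetaL))
      = (\<integral>\<^sup>+ ps. \<integral>\<^sup>+ zs. joint_density ((z, a), (ps, zs)) * G ((z, a), (ps, zs)) \<partial>ZetaL \<partial>PsiK)"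
    by (rule ZetaL.nn_integral_fst[symmetric, where f = "\<lambda>y. joint_density ((z, a), y) * G ((z, a), y)"])
      (use z a in measurable)
  also have "\<dots> = (\<integral>\<^sup>+ ps. ennreal (q z a) * (ennreal (\<Prod>k\<in>{1..K}. tau z (ps k)) * ?I ps) \<partial>PsiK)"
  proof (intro nn_integral_cong)
    fix ps assume ps: "ps \<in> space PsiK"
    have "0 \<le> (\<Prod>k\<in>{1..K}. tau z (ps k))"
      using ps z by (auto intro!: prod_nonneg tau_nn simp: space_PiM)
    then have "(\<integral>\<^sup>+ zs. joint_density ((z, a), (ps, zs)) * G ((z, a), (ps, zs)) \<partial>ZetaL)
        = (\<integral>\<^sup>+ zs. (ennreal (q z a) * ennreal (\<Prod>k\<in>{1..K}. tau z (ps k))) *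
            (ennreal (\<Prod>l\<in>{1..L}. rho z (zs l)) * G ((z, a), (ps, zs))) \<partial>ZetaL)"
      using q_nn[OF z a]
      by (intro nn_integral_cong) (simp add: joint_density_def ennreal_mult' ennreal_mult'' mult_ac)
    also have "\<dots> = (ennreal (q z a) * ennreal (\<Prod>k\<in>{1..K}. tau z (ps k))) * ?I ps"
      by (rule nn_integral_cmult) (use z a ps in measurable)
    finally show "(\<integral>\<^sup>+ zs. joint_density ((z, a), (ps, zs)) * G ((z, a), (ps, zs)) \<partial>ZetaL)
        = ennreal (q z a) * (ennreal (\<Prod>k\<in>{1..K}. tau z (ps k)) * ?I ps)"
      by (simp add: mult.assoc)
  qed
  also have "\<dots> = ennreal (q z a) * (\<integral>\<^sup>+ ps. ennreal (\<Prod>k\<in>{1..K}. tau z (ps k)) * ?I ps \<partial>PsiK)"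
    using z a by (intro nn_integral_cmult) measurable
  finally show ?thesis .
qed

lemma nn_integral_joint_measure:
  assumes [measurable]: "G \<in> borel_measurable ((Mz \<Otimes>\<^sub>M Mpsi) \<Otimes>\<^sub>M (PsiK \<Otimes>\<^sub>M ZetaL))"
  shows "(\<integral>\<^sup>+ w. G w \<partial>Jw) =
    (\<integral>\<^sup>+ z. \<integral>\<^sup>+ a. ennreal (q z a) *
       (\<integral>\<^sup>+ ps. ennreal (\<Prod>k\<in>{1..K}. tau z (ps k)) *
          (\<integral>\<^sup>+ zs. ennreal (\<Prod>l\<in>{1..L}. rho z (zs l)) * G ((z, a), (ps, zs)) \<partial>ZetaL) \<partial>PsiK) \<partial>Mpsi \<partial>Mz)"
proof -
  let ?D = joint_density
  have "(\<integral>\<^sup>+ w. G w \<partial>Jw) = (\<integral>\<^sup>+ w. ?D w * G w \<partial>((Mz \<Otimes>\<^sub>M Mpsi) \<Otimes>\<^sub>M (PsiK \<Otimes>\<^sub>M ZetaL)))"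
    unfolding joint_measure_eq_density by (rule nn_integral_density) measurable
  also have "\<dots> = (\<integral>\<^sup>+ x. \<integral>\<^sup>+ y. ?D (x, y) * G (x, y) \<partial>(PsiK \<Otimes>\<^sub>M ZetaL) \<partial>(Mz \<Otimes>\<^sub>M Mpsi))"
    by (rule PsiZeta.nn_integral_fst[symmetric]) measurable
  also have "\<dots> = (\<integral>\<^sup>+ z. \<integral>\<^sup>+ a. \<integral>\<^sup>+ y. ?D ((z, a), y) * G ((z, a), y) \<partial>(PsiK \<Otimes>\<^sub>M ZetaL) \<partial>Mpsi \<partial>Mz)"
    by (rule Psi.nn_integral_fst[symmetric,
          where f = "\<lambda>x. \<integral>\<^sup>+ y. ?D (x, y) * G (x, y) \<partial>(PsiK \<Otimes>\<^sub>M ZetaL)"]) measurable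
  also have "\<dots> = (\<integral>\<^sup>+ z. \<integral>\<^sup>+ a. ennreal (q z a) *
       (\<integral>\<^sup>+ ps. ennreal (\<Prod>k\<in>{1..K}. tau z (ps k)) *
          (\<integral>\<^sup>+ zs. ennreal (\<Prod>l\<in>{1..L}. rho z (zs l)) * G ((z, a), (ps, zs)) \<partial>ZetaL) \<partial>PsiK) \<partial>Mpsi \<partial>Mz)"
    by (intro nn_integral_cong nn_integral_joint_density_section assms)
  finally show ?thesis .
qed

lemma nn_integral_tau_prod: "z \<in> space Mz \<Longrightarrow> (\<integral>\<^sup>+ ps. ennreal (\<Prod>k\<in>{1..K}. tau z (ps k)) \<partial>PsiK) = 1"
  by (intro nn_integral_PiM_prod_density sigma_finite_Mpsi tau_nn tau_prob) simp_all

lemma nn_integral_rho_prod: "z \<in> space Mz \<Longrightarrow> (\<integral>\<^sup>+ zs. ennreal (\<Prod>l\<in>{1..L}. rho z (zs l)) \<partial>ZetaL) = 1"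
  by (intro nn_integral_PiM_prod_density sigma_finite_Mzeta rho_nn rho_prob) simp_all

lemma nn_integral_joint_measure_latent:
  assumes [measurable]: "g \<in> borel_measurable Mz"
  shows "(\<integral>\<^sup>+ w. g (fst (fst w)) \<partial>Jw) = (\<integral>\<^sup>+ z. g z \<partial>Qz)"
proof -
  have "(\<integral>\<^sup>+ w. g (fst (fst w)) \<partial>Jw) = (\<integral>\<^sup>+ z. \<integral>\<^sup>+ a. ennreal (q z a) * g z \<partial>Mpsi \<partial>Mz)"
  proof (subst nn_integral_joint_measure, measurable, intro nn_integral_cong)
    fix z a assume z: "z \<in> space Mz"
    have "(\<integral>\<^sup>+ zs. ennreal (\<Prod>l\<in>{1..L}. rho z (zs l)) * g z \<partial>ZetaL) = g z"
      using nn_integral_multc[of "\<lambda>zs. ennreal (\<Prod>l\<in>{1..L}. rho z (zs l))" ZetaL "g z"] z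
      by (simp only: nn_integral_rho_prod[OF z] mult_1) measurable
    moreover have "(\<integral>\<^sup>+ ps. ennreal (\<Prod>k\<in>{1..K}. tau z (ps k)) * g z \<partial>PsiK) = g z"
      using nn_integral_multc[of "\<lambda>ps. ennreal (\<Prod>k\<in>{1..K}. tau z (ps k))" PsiK "g z"] z
      by (simp only: nn_integral_tau_prod[OF z] mult_1) measurable
    ultimately have "(\<integral>\<^sup>+ ps. ennreal (\<Prod>k\<in>{1..K}. tau z (ps k)) *
            (\<integral>\<^sup>+ zs. ennreal (\<Prod>l\<in>{1..L}. rho z (zs l)) * g z \<partial>ZetaL) \<partial>PsiK) = g z"
      by simp
    then show "ennreal (q z a) * (\<integral>\<^sup>+ ps. ennreal (\<Prod>k\<in>{1..K}. tau z (ps k)) *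
            (\<integral>\<^sup>+ zs. ennreal (\<Prod>l\<in>{1..L}. rho z (zs l)) * g (fst (fst ((z, a), ps, zs))) \<partial>ZetaL) \<partial>PsiK)
        = ennreal (q z a) * g z"
      by simp
  qed
  also have "\<dots> = (\<integral>\<^sup>+ z. ennreal (qz z) * g z \<partial>Mz)"
    using AE_ennreal_qz by (intro nn_integral_cong_AE) (auto simp: nn_integral_multc)
  also have "\<dots> = (\<integral>\<^sup>+ z. g z \<partial>Qz)"
    unfolding qz_measure_def by (rule nn_integral_density[symmetric]) simp_all
  finally show ?thesis .
qed

lemma measurable_joint_measure_latent[measurable]: "(\<lambda>w. fst (fst w)) \<in> Jw \<rightarrow>\<^sub>M Mz"
  by (simp add: joint_measure_def)

lemma distr_joint_measure_latent: "distr Jw Mz (\<lambda>w. fst (fst w)) = Qz"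
proof (rule measure_eqI)
  fix A assume "A \<in> sets (distr Jw Mz (\<lambda>w. fst (fst w)))"
  then have [measurable]: "A \<in> sets Mz" by simp
  have "emeasure (distr Jw Mz (\<lambda>w. fst (fst w))) A = (\<integral>\<^sup>+ z. indicator A z \<partial>distr Jw Mz (\<lambda>w. fst (fst w)))"
    by (rule nn_integral_indicator[symmetric]) simp
  also have "\<dots> = (\<integral>\<^sup>+ w. indicator A (fst (fst w)) \<partial>Jw)"
    by (rule nn_integral_distr) simp_all
  also have "\<dots> = emeasure Qz A"
    by (subst nn_integral_joint_measure_latent) (simp_all add: qz_measure_def)
  finally show "emeasure (distr Jw Mz (\<lambda>w. fst (fst w))) A = emeasure Qz A" .
qed (simp add: qz_measure_def)

lemma prob_space_joint_measure: "prob_space Jw"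
proof (rule prob_spaceI)
  have "emeasure Jw (space Jw) = (\<integral>\<^sup>+ z. 1 \<partial>Qz)"
    using nn_integral_joint_measure_latent[of "\<lambda>_. 1"] by simp
  then show "emeasure Jw (space Jw) = 1"
    using prob_space.emeasure_space_1[OF prob_space_Qz] by simp
qed

definition pz_estimate :: "'z \<Rightarrow> (nat \<Rightarrow> 'c) \<Rightarrow> real" where
  "pz_estimate z zs = (1 / real L) * (\<Sum>l\<in>{1..L}. pj z (zs l) / rho z (zs l))"

definition qz_estimate :: "'z \<Rightarrow> 'b \<Rightarrow> (nat \<Rightarrow> 'b) \<Rightarrow> real" where
  "qz_estimate z a ps = (1 / real (K + 1)) * (q z a / tau z a + (\<Sum>k\<in>{1..K}. q z (ps k) / tau z (ps k)))"

lemma measurable_pz_estimate[measurable (raw)]: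
  assumes [measurable]: "f \<in> N \<rightarrow>\<^sub>M Mz" "g \<in> N \<rightarrow>\<^sub>M ZetaL"
  shows "(\<lambda>x. pz_estimate (f x) (g x)) \<in> borel_measurable N"
  unfolding pz_estimate_def by measurable

lemma measurable_qz_estimate[measurable (raw)]:
  assumes [measurable]: "f \<in> N \<rightarrow>\<^sub>M Mz" "g \<in> N \<rightarrow>\<^sub>M Mpsi" "h \<in> N \<rightarrow>\<^sub>M PsiK"
  shows "(\<lambda>x. qz_estimate (f x) (g x) (h x)) \<in> borel_measurable N"
  unfolding qz_estimate_def by measurable

lemma diw_ratio_eq:
  "diw_ratio K L lik pj q tau rho ((z, a), (ps, zs)) = lik z * pz_estimate z zs / qz_estimate z a ps"
  by (simp add: diw_ratio_def pz_estimate_def qz_estimate_def)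

lemma nn_integral_pz_estimate_le:
  assumes z: "z \<in> space Mz"
  shows "(\<integral>\<^sup>+ zs. ennreal ((\<Prod>l\<in>{1..L}. rho z (zs l)) * pz_estimate z zs) \<partial>ZetaL)
    \<le> (\<integral>\<^sup>+ a. ennreal (pj z a) \<partial>Mzeta)"
  using nn_integral_PiM_importance_average_le[OF sigma_finite_Mzeta, of "{1..L}" "rho z" "pj z"]
    L_pos z rho_nn pj_nn rho_prob
  by (simp add: pz_estimate_def)

lemma nn_integral_qz_estimate_le:
  assumes z: "z \<in> space Mz"
  shows "(\<integral>\<^sup>+ a. \<integral>\<^sup>+ ps. ennreal (q z a * (\<Prod>k\<in>{1..K}. tau z (ps k)) / qz_estimate z a ps) \<partial>PsiK \<partial>Mpsi) \<le> 1"
proof -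
  interpret product_sigma_finite "\<lambda>_. Mpsi"
    using sigma_finite_Mpsi by (simp add: product_sigma_finite_def)
  define v where "v a = q z a / tau z a" for a
  \<comment> \<open>the support condition makes this hold also where tau vanishes and v is 0 by x / 0 = 0\<close>
  have tau_v: "tau z a * v a = q z a" if "a \<in> space Mpsi" for a
    using tau_supp[OF z that] by (cases "tau z a = 0") (auto simp: v_def)
  define f where "f x = ennreal ((\<Prod>k\<in>{0..K}. tau z (x k)) *
      (v (x 0) / ((1 / real (card {0..K})) * (\<Sum>k\<in>{0..K}. v (x k)))))" for x
  have f_meas: "f \<in> borel_measurable (PiM {0..K} (\<lambda>_. Mpsi))"
    unfolding f_def v_def using z by measurable
  \<comment> \<open>psi_0 joins psi_1..psi_K as coordinate 0 of one i.i.d. tau-sample\<close>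
  have insert_0: "insert 0 {1..K} = {0..K}" by auto
  have "(\<integral>\<^sup>+ a. \<integral>\<^sup>+ ps. ennreal (q z a * (\<Prod>k\<in>{1..K}. tau z (ps k)) / qz_estimate z a ps) \<partial>PsiK \<partial>Mpsi)
      = (\<integral>\<^sup>+ a. \<integral>\<^sup>+ ps. f (ps(0 := a)) \<partial>PsiK \<partial>Mpsi)"
  proof (intro nn_integral_cong)
    fix a ps
    have "(\<Prod>k\<in>{0..K}. tau z ((ps(0 := a)) k)) = tau z a * (\<Prod>k\<in>{1..K}. tau z (ps k))"
      unfolding insert_0[symmetric] by (subst prod.insert) (auto intro!: prod.cong)
    moreover have "(\<Sum>k\<in>{0..K}. v ((ps(0 := a)) k)) = v a + (\<Sum>k\<in>{1..K}. v (ps k))"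
      unfolding insert_0[symmetric] by (subst sum.insert) (auto intro!: sum.cong)
    moreover assume "a \<in> space Mpsi"
    ultimately show "ennreal (q z a * (\<Prod>k\<in>{1..K}. tau z (ps k)) / qz_estimate z a ps) = f (ps(0 := a))"
      by (simp add: f_def qz_estimate_def v_def[symmetric] tau_v[symmetric] mult_ac)
  qed
  also have "\<dots> = integral\<^sup>N (PiM (insert 0 {1..K}) (\<lambda>_. Mpsi)) f"
    using f_meas unfolding insert_0[symmetric] by (intro product_nn_integral_insert_rev[symmetric]) auto
  also have "\<dots> = integral\<^sup>N (PiM {0..K} (\<lambda>_. Mpsi)) f"
    by (simp only: insert_0)
  also have "\<dots> \<le> 1"
    unfolding f_def v_def using z tau_nn q_nn tau_prob
    by (intro nn_integral_PiM_self_normalized_weight_le_1 sigma_finite_Mpsi) simp_all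
  finally show ?thesis .
qed

lemma pz_estimate_nn: "z \<in> space Mz \<Longrightarrow> zs \<in> space ZetaL \<Longrightarrow> 0 \<le> pz_estimate z zs"
  unfolding pz_estimate_def
  by (auto intro!: mult_nonneg_nonneg sum_nonneg divide_nonneg_nonneg pj_nn rho_nn simp: space_PiM)

lemma qz_estimate_nn: "z \<in> space Mz \<Longrightarrow> a \<in> space Mpsi \<Longrightarrow> ps \<in> space PsiK \<Longrightarrow> 0 \<le> qz_estimate z a ps"
  unfolding qz_estimate_def
  by (auto intro!: mult_nonneg_nonneg add_nonneg_nonneg sum_nonneg divide_nonneg_nonneg q_nn tau_nn
      simp: space_PiM)

lemma nn_integral_pz_estimate_ratio_le:
  assumes z: "z \<in> space Mz" and c: "0 \<le> c"
  shows "(\<integral>\<^sup>+ zs. ennreal (\<Prod>l\<in>{1..L}. rho z (zs l)) * ennreal (pz_estimate z zs / pz z * c) \<partial>ZetaL)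
    \<le> ennreal c"
proof (cases "pz z = 0")
  case False
  then have pz_pos: "0 < pz z"
    by (simp add: marg_def less_le)
  have pj_total: "(\<integral>\<^sup>+ a. ennreal (pj z a) \<partial>Mzeta) = ennreal (pz z)"
    using False by (cases "(\<integral>\<^sup>+ a. ennreal (pj z a) \<partial>Mzeta) = \<top>") (simp_all add: marg_def less_top)
  have "(\<integral>\<^sup>+ zs. ennreal (\<Prod>l\<in>{1..L}. rho z (zs l)) * ennreal (pz_estimate z zs / pz z * c) \<partial>ZetaL)
      = (\<integral>\<^sup>+ zs. ennreal ((\<Prod>l\<in>{1..L}. rho z (zs l)) * pz_estimate z zs) * ennreal (c / pz z) \<partial>ZetaL)"
  proof (intro nn_integral_cong)
    fix zs assume "zs \<in> space ZetaL"
    then have "0 \<le> (\<Prod>l\<in>{1..L}. rho z (zs l))"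
      using z by (auto intro!: prod_nonneg rho_nn simp: space_PiM)
    moreover have "0 \<le> c / pz z"
      using c pz_pos by simp
    ultimately show "ennreal (\<Prod>l\<in>{1..L}. rho z (zs l)) * ennreal (pz_estimate z zs / pz z * c)
        = ennreal ((\<Prod>l\<in>{1..L}. rho z (zs l)) * pz_estimate z zs) * ennreal (c / pz z)"
      by (simp only: ennreal_mult'[symmetric] ennreal_mult''[symmetric]) (simp add: mult.assoc)
  qed
  also have "\<dots> = (\<integral>\<^sup>+ zs. ennreal ((\<Prod>l\<in>{1..L}. rho z (zs l)) * pz_estimate z zs) \<partial>ZetaL) * ennreal (c / pz z)"
    using z by (intro nn_integral_multc) measurable
  also have "\<dots> \<le> ennreal (pz z) * ennreal (c / pz z)"
    using nn_integral_pz_estimate_le[OF z] by (intro mult_right_mono) (simp_all add: pj_total)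
  also have "\<dots> = ennreal c"
    using pz_pos by (simp flip: ennreal_mult')
  finally show ?thesis .
qed simp

lemma nn_integral_qz_estimate_ratio_le:
  assumes z: "z \<in> space Mz"
  shows "(\<integral>\<^sup>+ a. ennreal (q z a) *
      (\<integral>\<^sup>+ ps. ennreal (\<Prod>k\<in>{1..K}. tau z (ps k)) * ennreal (qz z / qz_estimate z a ps) \<partial>PsiK) \<partial>Mpsi)
    \<le> ennreal (qz z)"
proof -
  have "(\<integral>\<^sup>+ a. ennreal (q z a) *
      (\<integral>\<^sup>+ ps. ennreal (\<Prod>k\<in>{1..K}. tau z (ps k)) * ennreal (qz z / qz_estimate z a ps) \<partial>PsiK) \<partial>Mpsi)
    = (\<integral>\<^sup>+ a. \<integral>\<^sup>+ ps. ennreal (qz z) *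
          ennreal (q z a * (\<Prod>k\<in>{1..K}. tau z (ps k)) / qz_estimate z a ps) \<partial>PsiK \<partial>Mpsi)"
  proof (intro nn_integral_cong)
    fix a assume a: "a \<in> space Mpsi"
    have "ennreal (q z a) *
        (\<integral>\<^sup>+ ps. ennreal (\<Prod>k\<in>{1..K}. tau z (ps k)) * ennreal (qz z / qz_estimate z a ps) \<partial>PsiK)
      = (\<integral>\<^sup>+ ps. ennreal (q z a) * (ennreal (\<Prod>k\<in>{1..K}. tau z (ps k)) * ennreal (qz z / qz_estimate z a ps)) \<partial>PsiK)"
      using z a by (intro nn_integral_cmult[symmetric]) measurable
    also have "\<dots> = (\<integral>\<^sup>+ ps. ennreal (qz z) *
          ennreal (q z a * (\<Prod>k\<in>{1..K}. tau z (ps k)) / qz_estimate z a ps) \<partial>PsiK)"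
    proof (intro nn_integral_cong)
      fix ps assume ps: "ps \<in> space PsiK"
      let ?T = "\<Prod>k\<in>{1..K}. tau z (ps k)"
      have "0 \<le> ?T"
        using z ps by (auto intro!: prod_nonneg tau_nn simp: space_PiM)
      then have "ennreal (q z a) * (ennreal ?T * ennreal (qz z / qz_estimate z a ps))
          = ennreal (q z a * (?T * (qz z / qz_estimate z a ps)))"
        using q_nn[OF z a] by (simp only: ennreal_mult')
      also have "q z a * (?T * (qz z / qz_estimate z a ps)) = qz z * (q z a * ?T / qz_estimate z a ps)"
        by (simp add: ac_simps)
      also have "ennreal (qz z * (q z a * ?T / qz_estimate z a ps))
          = ennreal (qz z) * ennreal (q z a * ?T / qz_estimate z a ps)"
        by (rule ennreal_mult') (simp add: marg_def)
      finally show "ennreal (q z a) * (ennreal ?T * ennreal (qz z / qz_estimate z a ps))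
          = ennreal (qz z) * ennreal (q z a * ?T / qz_estimate z a ps)" .
    qed
    finally show "ennreal (q z a) *
        (\<integral>\<^sup>+ ps. ennreal (\<Prod>k\<in>{1..K}. tau z (ps k)) * ennreal (qz z / qz_estimate z a ps) \<partial>PsiK)
      = (\<integral>\<^sup>+ ps. ennreal (qz z) *
          ennreal (q z a * (\<Prod>k\<in>{1..K}. tau z (ps k)) / qz_estimate z a ps) \<partial>PsiK)" .
  qed
  also have "\<dots> = ennreal (qz z) *
      (\<integral>\<^sup>+ a. \<integral>\<^sup>+ ps. ennreal (q z a * (\<Prod>k\<in>{1..K}. tau z (ps k)) / qz_estimate z a ps) \<partial>PsiK \<partial>Mpsi)"
  proof -
    have "(\<integral>\<^sup>+ ps. ennreal (qz z) * ennreal (q z a * (\<Prod>k\<in>{1..K}. tau z (ps k)) / qz_estimate z a ps) \<partial>PsiK)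
        = ennreal (qz z) * (\<integral>\<^sup>+ ps. ennreal (q z a * (\<Prod>k\<in>{1..K}. tau z (ps k)) / qz_estimate z a ps) \<partial>PsiK)"
      if "a \<in> space Mpsi" for a
      using z that by (intro nn_integral_cmult) measurable
    then show ?thesis
      using z by (subst nn_integral_cmult[symmetric]) (measurable, auto intro!: nn_integral_cong)
  qed
  also have "\<dots> \<le> ennreal (qz z) * 1"
    using nn_integral_qz_estimate_le[OF z] by (rule mult_left_mono) simp
  finally show ?thesis by simp
qed

lemma diw_ratio_div_elbo_ratio_le:
  assumes z: "z \<in> space Mz" and a: "a \<in> space Mpsi" and ps: "ps \<in> space PsiK" and zs: "zs \<in> space ZetaL"
  shows "diw_ratio K L lik pj q tau rho ((z, a), (ps, zs)) / elbo_ratio z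
    \<le> pz_estimate z zs / pz z * (qz z / qz_estimate z a ps)"
proof (cases "lik z = 0")
  case True
  \<comment> \<open>then the left-hand side is 0 / 0 = 0\<close>
  then show ?thesis
    using pz_estimate_nn[OF z zs] qz_estimate_nn[OF z a ps]
    by (simp add: diw_ratio_eq elbo_ratio_def marg_def)
qed (simp add: diw_ratio_eq elbo_ratio_def field_simps)

lemma nn_integral_diw_ratio_div_elbo_ratio_le_1:
  "(\<integral>\<^sup>+ w. ennreal (diw_ratio K L lik pj q tau rho w / elbo_ratio (fst (fst w))) \<partial>Jw) \<le> 1"
proof -
  define G where "G w = ennreal (pz_estimate (fst (fst w)) (snd (snd w)) / pz (fst (fst w)) *
      (qz (fst (fst w)) / qz_estimate (fst (fst w)) (snd (fst w)) (fst (snd w))))" for w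
  have [measurable]: "G \<in> borel_measurable ((Mz \<Otimes>\<^sub>M Mpsi) \<Otimes>\<^sub>M (PsiK \<Otimes>\<^sub>M ZetaL))"
    unfolding G_def by measurable
  have "(\<integral>\<^sup>+ w. ennreal (diw_ratio K L lik pj q tau rho w / elbo_ratio (fst (fst w))) \<partial>Jw) \<le> (\<integral>\<^sup>+ w. G w \<partial>Jw)"
    using diw_ratio_div_elbo_ratio_le
    by (intro nn_integral_mono) (auto simp: G_def joint_measure_def space_pair_measure intro!: ennreal_leI)
  also have "\<dots> = (\<integral>\<^sup>+ z. \<integral>\<^sup>+ a. ennreal (q z a) *
       (\<integral>\<^sup>+ ps. ennreal (\<Prod>k\<in>{1..K}. tau z (ps k)) *
          (\<integral>\<^sup>+ zs. ennreal (\<Prod>l\<in>{1..L}. rho z (zs l)) * G ((z, a), (ps, zs)) \<partial>ZetaL) \<partial>PsiK) \<partial>Mpsi \<partial>Mz)"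
    by (rule nn_integral_joint_measure) measurable
  also have "\<dots> \<le> (\<integral>\<^sup>+ z. \<integral>\<^sup>+ a. ennreal (q z a) *
       (\<integral>\<^sup>+ ps. ennreal (\<Prod>k\<in>{1..K}. tau z (ps k)) * ennreal (qz z / qz_estimate z a ps) \<partial>PsiK) \<partial>Mpsi \<partial>Mz)"
  proof (intro nn_integral_mono mult_left_mono)
    fix z a ps assume z: "z \<in> space Mz" and a: "a \<in> space Mpsi" and ps: "ps \<in> space PsiK"
    have "0 \<le> qz z / qz_estimate z a ps"
      using qz_estimate_nn[OF z a ps] by (simp add: marg_def)
    then show "(\<integral>\<^sup>+ zs. ennreal (\<Prod>l\<in>{1..L}. rho z (zs l)) * G ((z, a), (ps, zs)) \<partial>ZetaL)
        \<le> ennreal (qz z / qz_estimate z a ps)"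
      unfolding G_def fst_conv snd_conv by (rule nn_integral_pz_estimate_ratio_le[OF z])
  qed simp_all
  also have "\<dots> \<le> (\<integral>\<^sup>+ z. ennreal (qz z) \<partial>Mz)"
    by (intro nn_integral_mono nn_integral_qz_estimate_ratio_le)
  also have "\<dots> = 1"
    by (rule nn_integral_qz)
  finally show ?thesis .
qed

theorem diw_bound_le_elbo:
  assumes elbo_ratio_pos: "AE z in Qz. 0 < elbo_ratio z"
    and elbo_integrable: "integrable Qz (\<lambda>z. ln (elbo_ratio z))"
    and diw_ratio_pos: "AE w in Jw. 0 < diw_ratio K L lik pj q tau rho w"
    and diw_integrable: "integrable Jw (\<lambda>w. ln (diw_ratio K L lik pj q tau rho w))"
  shows "(\<integral> w. ln (diw_ratio K L lik pj q tau rho w) \<partial>Jw) \<le> (\<integral> z. ln (elbo_ratio z) \<partial>Qz)"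
proof -
  interpret J: prob_space Jw by (rule prob_space_joint_measure)
  note Qz_eq = distr_joint_measure_latent[symmetric]
  have "AE w in Jw. 0 < elbo_ratio (fst (fst w))"
    using elbo_ratio_pos unfolding Qz_eq by (subst (asm) AE_distr_iff) simp_all
  moreover have "integrable Jw (\<lambda>w. ln (elbo_ratio (fst (fst w))))"
    using elbo_integrable unfolding Qz_eq by (subst (asm) integrable_distr_eq) simp_all
  ultimately have "(\<integral> w. ln (diw_ratio K L lik pj q tau rho w) \<partial>Jw) \<le> (\<integral> w. ln (elbo_ratio (fst (fst w))) \<partial>Jw)"
    using diw_ratio_pos diw_integrable nn_integral_diw_ratio_div_elbo_ratio_le_1
    by (intro J.integral_ln_le_of_nn_integral_ratio_le_1)
  also have "\<dots> = (\<integral> z. ln (elbo_ratio z) \<partial>Qz)"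
    unfolding Qz_eq by (subst integral_distr) simp_all
  finally show ?thesis .
qed

end

theorem mainTheorem5:
  fixes Mz :: "'z measure" and Mpsi :: "'b measure" and Mzeta :: "'c measure"
    and K L :: nat
    and lik :: "'z \<Rightarrow> real" and pj :: "'z \<Rightarrow> 'c \<Rightarrow> real"
    and q tau :: "'z \<Rightarrow> 'b \<Rightarrow> real" and rho :: "'z \<Rightarrow> 'c \<Rightarrow> real"
  assumes sf: "sigma_finite_measure Mz" "sigma_finite_measure Mpsi" "sigma_finite_measure Mzeta"
    and L1: "L \<ge> 1"
    and lik_meas: "lik \<in> borel_measurable Mz" and lik_nn: "\<And>z. z \<in> space Mz \<Longrightarrow> lik z \<ge> 0"
    and pj_meas: "(\<lambda>(z, zeta). pj z zeta) \<in> borel_measurable (Mz \<Otimes>\<^sub>M Mzeta)"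
    and pj_nn: "\<And>z zeta. z \<in> space Mz \<Longrightarrow> zeta \<in> space Mzeta \<Longrightarrow> pj z zeta \<ge> 0"
    and q_meas: "(\<lambda>(z, psi). q z psi) \<in> borel_measurable (Mz \<Otimes>\<^sub>M Mpsi)"
    and q_nn: "\<And>z psi. z \<in> space Mz \<Longrightarrow> psi \<in> space Mpsi \<Longrightarrow> q z psi \<ge> 0"
    and q_prob: "(\<integral>\<^sup>+ w. ennreal (case w of (z, psi) \<Rightarrow> q z psi) \<partial>(Mz \<Otimes>\<^sub>M Mpsi)) = 1"
    and tau_meas: "(\<lambda>(z, psi). tau z psi) \<in> borel_measurable (Mz \<Otimes>\<^sub>M Mpsi)"
    and tau_nn: "\<And>z psi. z \<in> space Mz \<Longrightarrow> psi \<in> space Mpsi \<Longrightarrow> tau z psi \<ge> 0"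
    and tau_prob: "\<And>z. z \<in> space Mz \<Longrightarrow> (\<integral>\<^sup>+ psi. ennreal (tau z psi) \<partial>Mpsi) = 1"
    and tau_supp: "\<And>z psi. z \<in> space Mz \<Longrightarrow> psi \<in> space Mpsi \<Longrightarrow> tau z psi = 0 \<Longrightarrow> q z psi = 0"
    and rho_meas: "(\<lambda>(z, zeta). rho z zeta) \<in> borel_measurable (Mz \<Otimes>\<^sub>M Mzeta)"
    and rho_nn: "\<And>z zeta. z \<in> space Mz \<Longrightarrow> zeta \<in> space Mzeta \<Longrightarrow> rho z zeta \<ge> 0"
    and rho_prob: "\<And>z. z \<in> space Mz \<Longrightarrow> (\<integral>\<^sup>+ zeta. ennreal (rho z zeta) \<partial>Mzeta) = 1"
    and px_fin: "evidence Mz Mzeta lik pj < \<infinity>"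
    and elbo_pos: "AE z in qz_measure Mz Mpsi q. lik z * marg Mzeta pj z / marg Mpsi q z > 0"
    and elbo_int: "integrable (qz_measure Mz Mpsi q) (elbo_integrand Mpsi Mzeta lik pj q)"
    and diw_pos: "AE w in joint_measure Mz Mpsi Mzeta K L q tau rho. diw_ratio K L lik pj q tau rho w > 0"
    and diw_int: "integrable (joint_measure Mz Mpsi Mzeta K L q tau rho) (diw_integrand K L lik pj q tau rho)"
  shows "ln (enn2real (evidence Mz Mzeta lik pj))
           \<ge> (\<integral> z. elbo_integrand Mpsi Mzeta lik pj q z \<partial>qz_measure Mz Mpsi q)
         \<and> (\<integral> z. elbo_integrand Mpsi Mzeta lik pj q z \<partial>qz_measure Mz Mpsi q)
           \<ge> (\<integral> w. diw_integrand K L lik pj q tau rho w \<partial>joint_measure Mz Mpsi Mzeta K L q tau rho)"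
proof -
  interpret diw_model Mz Mpsi Mzeta lik pj q K L tau rho
    by (intro diw_model.intro latent_variable_model.intro diw_model_axioms.intro) (fact assms)+
  have elbo_ratio_pos: "AE z in Qz. 0 < elbo_ratio z"
    using elbo_pos by (simp add: elbo_ratio_def)
  have elbo_integrable: "integrable Qz (\<lambda>z. ln (elbo_ratio z))"
    using elbo_int by (simp add: elbo_integrand_eq)
  have diw_integrable: "integrable Jw (\<lambda>w. ln (diw_ratio K L lik pj q tau rho w))"
    using diw_int by (simp add: diw_integrand_def[abs_def])
  show ?thesis
    using elbo_le_ln_evidence[OF px_fin elbo_ratio_pos elbo_integrable]
      diw_bound_le_elbo[OF elbo_ratio_pos elbo_integrable diw_pos diw_integrable]
    by (simp add: elbo_integrand_eq diw_integrand_def[abs_def])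
qed

end
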